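(* Fix $a\ge0$, $x\ge0$, $\varepsilon>0$. Almost surely: (1) On $\{\tau_0^{(x),-}<T_a^{(x),+}\}$: $\inf\{t>0:R^{(x+\varepsilon)}(t)-R^{(x)}(t)<0\}\ge\tau_0^{(x),-}$. (2) On $\{\tau_0^{(x+\varepsilon),-}<T_a^{(x+\varepsilon),+}\}$: $L^{(x+\varepsilon)}(t)-L^{(x)}(t)=0$ for all $t\ge0$, and $R^{(x+\varepsilon)}(t)-R^{(x)}(t)=0$ for $t\in[0,\tau_0^{(x),-})$ while $R^{(x+\varepsilon)}(t)-R^{(x)}(t)=-\varepsilon$ for $t\in[\tau_0^{(x+\varepsilon),-},\infty)$. (3) On $\{T_a^{(x+\varepsilon),+}<\tau_0^{(x+\varepsilon),-}\}$: $\inf\{t>0:L^{(x+\varepsilon)}(t)-L^{(x)}(t)>0\}\ge T_a^{(x+\varepsilon),+}$. (4) On $\{T_a^{(x),+}<\tau_0^{(x),-}\}$: $L^{(x+\varepsilon)}(t)-L^{(x)}(t)=0$ for $t\in[0,T_a^{(x+\varepsilon),+})$ and $=\varepsilon$ for $t\in[T_a^{(x),+},\infty)$, and $R^{(x+\varepsilon)}(t)-R^{(x)}(t)=0$ for all $t\ge0$.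
   Context: $X$ is a real-valued Lévy process with $X(0)=0$ under $\mathbb{P}$; $N_r$ is an independent Poisson process of rate $r>0$ with arrival times $0<T_1<T_2<\cdots$, $T_0:=0$. For $y\ge0$ let $X^{(y)}:=X+y$, $T_a^{(y),+}:=\inf\{T_k:k\ge1,\ X^{(y)}(T_k)>a\}$ and $\tau_0^{(y),-}:=\inf\{t\ge0:X^{(y)}(t)<0\}$. Given $a\ge0$, $(U^{(y)},L^{(y)},R^{(y)})$ is the periodic-classical barrier strategy at $a$ driven by $X^{(y)}$: $U^{(y)}=X^{(y)}-L^{(y)}+R^{(y)}$; $L^{(y)}(0)=0$ and $L^{(y)}$ is constant on each $[T_k,T_{k+1})$; on $[T_k,T_{k+1})$, with $Y(t):=U^{(y)}(T_k)+X(t)-X(T_k)$ (where $U^{(y)}(T_0):=y$), $R^{(y)}(t)=R^{(y)}(T_k)+\max\{0,\sup_{s\in[T_k,t]}(-Y(s))\}$ (with $R^{(y)}(T_0):=0$) and $U^{(y)}(t)=Y(t)+R^{(y)}(t)-R^{(y)}(T_k)$; at $T_{k+1}$, $L^{(y)}$ jumps by $(U^{(y)}(T_{k+1}-)-a)^+$ and $U^{(y)}(T_{k+1})=\min\{U^{(y)}(T_{k+1}-),a\}$. *)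

theory Defs
  imports "HOL-Probability.Probability"
begin

definition cadlag :: "(real \<Rightarrow> real) \<Rightarrow> bool" where
  "cadlag f \<longleftrightarrow> (\<forall>t\<ge>0. continuous (at_right t) f) \<and>
                  (\<forall>t>0. \<exists>l. (f \<longlongrightarrow> l) (at_left t))"

definition levy_process :: "'a measure \<Rightarrow> (real \<Rightarrow> 'a \<Rightarrow> real) \<Rightarrow> bool" where
  "levy_process M X \<longleftrightarrow> prob_space M \<and>
     (\<forall>t. X t \<in> borel_measurable M) \<and>
     (AE \<omega> in M. X 0 \<omega> = 0) \<and>
     (AE \<omega> in M. cadlag (\<lambda>t. X t \<omega>)) \<and>
     (\<forall>(ts::nat \<Rightarrow> real) n. ts 0 \<ge> 0 \<and> strict_mono ts \<longrightarrow>
        prob_space.indep_vars M (\<lambda>_. borel) (\<lambda>i \<omega>. X (ts (Suc i)) \<omega> - X (ts i) \<omega>) {..<n}) \<and>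
     (\<forall>s\<ge>0. \<forall>t\<ge>0. distr M borel (\<lambda>\<omega>. X (s + t) \<omega> - X s \<omega>) = distr M borel (\<lambda>\<omega>. X t \<omega> - X 0 \<omega>))"

definition poisson_arrivals :: "'a measure \<Rightarrow> real \<Rightarrow> (nat \<Rightarrow> 'a \<Rightarrow> real) \<Rightarrow> bool" where
  "poisson_arrivals M r T \<longleftrightarrow> prob_space M \<and>
     (\<forall>\<omega>\<in>space M. T 0 \<omega> = 0) \<and>
     (\<forall>k. T k \<in> borel_measurable M) \<and>
     prob_space.indep_vars M (\<lambda>_. borel) (\<lambda>k \<omega>. T (Suc k) \<omega> - T k \<omega>) UNIV \<and>
     (\<forall>k. distributed M lborel (\<lambda>\<omega>. T (Suc k) \<omega> - T k \<omega>) (exponential_density r))"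

definition indep_processes :: "'a measure \<Rightarrow> (real \<Rightarrow> 'a \<Rightarrow> real) \<Rightarrow> (nat \<Rightarrow> 'a \<Rightarrow> real) \<Rightarrow> bool" where
  "indep_processes M X T \<longleftrightarrow> prob_space.indep_set M
     (sigma_sets (space M) {X t -` B \<inter> space M | t B. B \<in> sets borel})
     (sigma_sets (space M) {T k -` B \<inter> space M | k B. B \<in> sets borel})"

text \<open>On [T k, T (Suc k)) starting from U(T k) = u.\<close>
definition pc_Uint :: "(real \<Rightarrow> real) \<Rightarrow> (nat \<Rightarrow> real) \<Rightarrow> real \<Rightarrow> nat \<Rightarrow> real \<Rightarrow> real" where
  "pc_Uint X T u k t = u + X t - X (T k)
      + max 0 (SUP s\<in>{T k..t}. - (u + X s - X (T k)))"

text \<open>(U(T k), L(T k)).\<close>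
fun pc_state :: "(real \<Rightarrow> real) \<Rightarrow> (nat \<Rightarrow> real) \<Rightarrow> real \<Rightarrow> real \<Rightarrow> nat \<Rightarrow> real \<times> real" where
  "pc_state X T a y 0 = (y, 0)"
| "pc_state X T a y (Suc k) =
     (let (u, l) = pc_state X T a y k;
          um = Lim (at_left (T (Suc k))) (pc_Uint X T u k)
      in (min um a, l + max (um - a) 0))"

definition pc_idx :: "(nat \<Rightarrow> real) \<Rightarrow> real \<Rightarrow> nat" where
  "pc_idx T t = (GREATEST k. T k \<le> t)"

definition pc_U :: "(real \<Rightarrow> real) \<Rightarrow> (nat \<Rightarrow> real) \<Rightarrow> real \<Rightarrow> real \<Rightarrow> real \<Rightarrow> real" where
  "pc_U X T a y t = pc_Uint X T (fst (pc_state X T a y (pc_idx T t))) (pc_idx T t) t"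

definition pc_L :: "(real \<Rightarrow> real) \<Rightarrow> (nat \<Rightarrow> real) \<Rightarrow> real \<Rightarrow> real \<Rightarrow> real \<Rightarrow> real" where
  "pc_L X T a y t = snd (pc_state X T a y (pc_idx T t))"

text \<open>R is determined by U = X^(y) - L + R.\<close>
definition pc_R :: "(real \<Rightarrow> real) \<Rightarrow> (nat \<Rightarrow> real) \<Rightarrow> real \<Rightarrow> real \<Rightarrow> real \<Rightarrow> real" where
  "pc_R X T a y t = pc_U X T a y t - (X t + y) + pc_L X T a y t"

section \<open>Hitting times (extended reals, inf of empty set = \<infinity>)\<close>

definition tau0 :: "(real \<Rightarrow> real) \<Rightarrow> real \<Rightarrow> ereal" where
  "tau0 X y = Inf {ereal t | t. t \<ge> 0 \<and> X t + y < 0}"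

definition Tplus :: "(real \<Rightarrow> real) \<Rightarrow> (nat \<Rightarrow> real) \<Rightarrow> real \<Rightarrow> real \<Rightarrow> ereal" where
  "Tplus X T a y = Inf {ereal (T k) | k. k \<ge> 1 \<and> X (T k) + y > a}"

definition first_time :: "(real \<Rightarrow> bool) \<Rightarrow> ereal" where
  "first_time P = Inf {ereal t | t. t > 0 \<and> P t}"

end

theory Submission
  imports Defs
begin

text \<open>
  Along a fixed path, the strategy started from y coincides up to its first dividend with the
  classical reflected path X(t) + max(y, sup_{s \<le> t} -X(s)). For y \<le> y' two such paths merge
  once X has dropped below -y'; and once both strategies have paid a dividend at the same
  Poisson time their controlled processes agree forever, so the differences of L and of R are
  frozen from then on. Which comes first, ruin or the first dividend, decides the four cases.

  The only probabilistic input is that almost surely the arrival times increase to infinity and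
  X does not jump at any of them; this is needed because the strategy is built from the left
  limits U(T_k-), while T_a^+ inspects X(T_k). A jump at T_k would show up, on every fine grid,
  as an increment larger than some c > 0 over the grid cell containing T_k; by independence
  and stationary increments this has probability at most P(|X(h)| > c), which tends to zero
  with the mesh h by right continuity at 0.
\<close>

section \<open>Cadlag paths and their running suprema\<close>

definition sup_neg :: "(real \<Rightarrow> real) \<Rightarrow> real \<Rightarrow> real \<Rightarrow> real" where
  "sup_neg X \<alpha> t = (SUP s\<in>{\<alpha>..t}. - X s)"

definition reflected :: "(real \<Rightarrow> real) \<Rightarrow> real \<Rightarrow> real \<Rightarrow> real" where
  "reflected X y t = X t + max y (sup_neg X 0 t)"

lemma reflected_mono: "y \<le> y' \<Longrightarrow> reflected X y t \<le> reflected X y' t"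
  unfolding reflected_def by simp

lemma tau0_le: "0 \<le> s \<Longrightarrow> X s + y < 0 \<Longrightarrow> tau0 X y \<le> ereal s"
  unfolding tau0_def by (intro Inf_lower) auto

lemma nonneg_before_tau0:
  assumes "ereal t < tau0 X y" "0 \<le> s" "s \<le> t"
  shows "0 \<le> X s + y"
proof (rule ccontr)
  assume "\<not> 0 \<le> X s + y"
  then have "tau0 X y \<le> ereal t"
    using tau0_le[of s X y] assms(2,3) by (simp add: order_trans)
  then show False using assms(1) by simp
qed

lemma tau0_mono: "y \<le> y' \<Longrightarrow> tau0 X y \<le> tau0 X y'"
  unfolding tau0_def by (rule Inf_superset_mono) auto

lemma Tplus_antimono: "y \<le> y' \<Longrightarrow> Tplus X T a y' \<le> Tplus X T a y"
  unfolding Tplus_def by (rule Inf_superset_mono) auto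

lemma first_index_in_range:
  fixes P :: "nat \<Rightarrow> bool"
  assumes "1 \<le> j" "j \<le> k" "P j"
  obtains K where "1 \<le> K" "K \<le> k" "P K" "\<And>i. 1 \<le> i \<Longrightarrow> i < K \<Longrightarrow> \<not> P i"
proof -
  obtain K where "K \<le> j" "\<forall>i<K. \<not> (1 \<le> i \<and> P i)" "1 \<le> K \<and> P K"
    using ex_least_nat_le[of "\<lambda>i. 1 \<le> i \<and> P i" j] assms(1,3) by blast
  then show ?thesis using assms(2) by (intro that[of K]) auto
qed

locale cadlag_path =
  fixes X :: "real \<Rightarrow> real"
  assumes cadlag: "cadlag X"
begin

lemma locally_bounded:
  assumes "0 \<le> p"
  shows "\<exists>d>0. \<exists>B. \<forall>s. 0 \<le> s \<and> \<bar>s - p\<bar> < d \<longrightarrow> \<bar>X s\<bar> \<le> B"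
proof -
  have "(X \<longlongrightarrow> X p) (at_right p)"
    using cadlag assms unfolding cadlag_def continuous_within by auto
  then obtain b1 where "p < b1" and b1: "\<And>s. p < s \<Longrightarrow> s < b1 \<Longrightarrow> \<bar>X s - X p\<bar> < 1"
    using tendstoD[of X "X p" "at_right p" 1]
    unfolding eventually_at_right_field dist_real_def by auto
  obtain l b2 where "b2 < p" and b2: "\<And>s. 0 \<le> s \<Longrightarrow> b2 < s \<Longrightarrow> s < p \<Longrightarrow> \<bar>X s - l\<bar> < 1"
  proof (cases "p = 0")
    case True
    show ?thesis by (rule that[of "-1"]) (use True in auto) \<comment> \<open>vacuous: no 0 \<le> s < 0\<close>
  next
    case False
    then have "0 < p" using assms by simp
    then obtain l where "(X \<longlongrightarrow> l) (at_left p)"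
      using cadlag unfolding cadlag_def by blast
    then obtain b2 where "b2 < p" "\<And>s. b2 < s \<Longrightarrow> s < p \<Longrightarrow> \<bar>X s - l\<bar> < 1"
      using tendstoD[of X l "at_left p" 1]
      unfolding eventually_at_left_field dist_real_def by auto
    then show ?thesis using that by blast
  qed
  have "\<bar>X s\<bar> \<le> \<bar>X p\<bar> + \<bar>l\<bar> + 1" if "0 \<le> s" "\<bar>s - p\<bar> < min (b1 - p) (p - b2)" for s
    using that b1[of s] b2[of s] by (cases s p rule: linorder_cases) auto
  moreover have "0 < min (b1 - p) (p - b2)"
    using \<open>p < b1\<close> \<open>b2 < p\<close> by simp
  ultimately show ?thesis by blast
qed

lemma bounded_on_interval:
  assumes "0 \<le> \<alpha>"
  obtains B where "\<And>s. \<alpha> \<le> s \<Longrightarrow> s \<le> \<beta> \<Longrightarrow> \<bar>X s\<bar> \<le> B"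
proof -
  obtain d B where d_pos: "\<And>p. 0 \<le> p \<Longrightarrow> 0 < d p"
    and B: "\<And>p s. 0 \<le> p \<Longrightarrow> 0 \<le> s \<Longrightarrow> \<bar>s - p\<bar> < d p \<Longrightarrow> \<bar>X s\<bar> \<le> B p"
    using locally_bounded by metis
  have "{\<alpha>..\<beta>} \<subseteq> (\<Union>p\<in>{\<alpha>..\<beta>}. ball p (d p))"
  proof
    fix s assume "s \<in> {\<alpha>..\<beta>}"
    then show "s \<in> (\<Union>p\<in>{\<alpha>..\<beta>}. ball p (d p))"
      using d_pos[of s] assms by (intro UN_I[of s]) auto
  qed
  then obtain F where F: "F \<subseteq> {\<alpha>..\<beta>}" "finite F" "{\<alpha>..\<beta>} \<subseteq> (\<Union>p\<in>F. ball p (d p))"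
    using compactE_image[of "{\<alpha>..\<beta>}" "{\<alpha>..\<beta>}" "\<lambda>p. ball p (d p)"] by auto
  show ?thesis
  proof (rule that)
    fix s assume "\<alpha> \<le> s" "s \<le> \<beta>"
    then obtain p where p: "p \<in> F" "\<bar>s - p\<bar> < d p"
      using F(3) by (auto simp: dist_real_def abs_minus_commute)
    then have "\<bar>X s\<bar> \<le> B p"
      using B[of p s] F(1) assms \<open>\<alpha> \<le> s\<close> by auto
    also have "\<dots> \<le> \<bar>B p\<bar>" by simp
    also have "\<dots> \<le> (\<Sum>p\<in>F. \<bar>B p\<bar>)"
      using p(1) F(2) by (intro member_le_sum) auto
    finally show "\<bar>X s\<bar> \<le> (\<Sum>p\<in>F. \<bar>B p\<bar>)" .
  qed
qed

lemma bdd_above_shifted_neg: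
  assumes "0 \<le> \<alpha>"
  shows "bdd_above ((\<lambda>s. c - X s) ` {\<alpha>..t})"
proof -
  obtain B where "\<And>s. \<alpha> \<le> s \<Longrightarrow> s \<le> t \<Longrightarrow> \<bar>X s\<bar> \<le> B"
    using bounded_on_interval[OF assms] by blast
  then show ?thesis by (intro bdd_aboveI2[of _ _ "c + B"]) force
qed

lemma sup_neg_upper: "0 \<le> \<alpha> \<Longrightarrow> \<alpha> \<le> s \<Longrightarrow> s \<le> t \<Longrightarrow> - X s \<le> sup_neg X \<alpha> t"
  unfolding sup_neg_def using bdd_above_shifted_neg[of \<alpha> 0 t]
  by (intro cSUP_upper2[of _ _ s]) auto

lemma sup_neg_le_iff:
  "0 \<le> \<alpha> \<Longrightarrow> \<alpha> \<le> t \<Longrightarrow> sup_neg X \<alpha> t \<le> c \<longleftrightarrow> (\<forall>s\<in>{\<alpha>..t}. - X s \<le> c)"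
  unfolding sup_neg_def using bdd_above_shifted_neg[of \<alpha> 0 t] by (subst cSUP_le_iff) auto

lemma sup_neg_refl: "0 \<le> \<alpha> \<Longrightarrow> sup_neg X \<alpha> \<alpha> = - X \<alpha>"
  using sup_neg_le_iff[of \<alpha> \<alpha> "- X \<alpha>"] sup_neg_upper[of \<alpha> \<alpha> \<alpha>] by simp

lemma sup_neg_mono: "0 \<le> \<alpha> \<Longrightarrow> \<alpha> \<le> t \<Longrightarrow> t \<le> t' \<Longrightarrow> sup_neg X \<alpha> t \<le> sup_neg X \<alpha> t'"
  by (subst sup_neg_le_iff) (auto intro!: sup_neg_upper)

lemma sup_neg_split:
  assumes "0 \<le> \<alpha>" "\<alpha> \<le> \<beta>" "\<beta> \<le> t"
  shows "sup_neg X \<alpha> t = max (sup_neg X \<alpha> \<beta>) (sup_neg X \<beta> t)"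
proof (rule antisym)
  have "- X s \<le> max (sup_neg X \<alpha> \<beta>) (sup_neg X \<beta> t)" if "\<alpha> \<le> s" "s \<le> t" for s
    using sup_neg_upper[of \<alpha> s \<beta>] sup_neg_upper[of \<beta> s t] that assms
    by (cases "s \<le> \<beta>") auto
  then show "sup_neg X \<alpha> t \<le> max (sup_neg X \<alpha> \<beta>) (sup_neg X \<beta> t)"
    using assms by (subst sup_neg_le_iff) auto
  show "max (sup_neg X \<alpha> \<beta>) (sup_neg X \<beta> t) \<le> sup_neg X \<alpha> t"
    using assms by (auto simp: sup_neg_le_iff intro!: sup_neg_upper)
qed

lemma SUP_shifted_neg:
  assumes "0 \<le> \<alpha>" "\<alpha> \<le> t"
  shows "(SUP s\<in>{\<alpha>..t}. c - X s) = c + sup_neg X \<alpha> t"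
proof (rule antisym)
  show "(SUP s\<in>{\<alpha>..t}. c - X s) \<le> c + sup_neg X \<alpha> t"
    using assms sup_neg_upper[of \<alpha> _ t] by (intro cSUP_least) auto
  have "- X s \<le> (SUP s\<in>{\<alpha>..t}. c - X s) - c" if "s \<in> {\<alpha>..t}" for s
    using cSUP_upper[OF that bdd_above_shifted_neg[OF assms(1), of c t]] by simp
  then have "sup_neg X \<alpha> t \<le> (SUP s\<in>{\<alpha>..t}. c - X s) - c"
    using assms by (subst sup_neg_le_iff) auto
  then show "c + sup_neg X \<alpha> t \<le> (SUP s\<in>{\<alpha>..t}. c - X s)" by simp
qed

lemma sup_neg_tendsto_left:
  assumes "0 \<le> \<alpha>" "\<alpha> < b" and left_cont: "(X \<longlongrightarrow> X b) (at_left b)"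
  shows "((\<lambda>t. sup_neg X \<alpha> t) \<longlongrightarrow> sup_neg X \<alpha> b) (at_left b)"
proof (rule order_tendstoI)
  fix z assume "z < sup_neg X \<alpha> b"
  then obtain s where s: "\<alpha> \<le> s" "s \<le> b" "z < - X s"
    using sup_neg_le_iff[of \<alpha> b z] assms by (auto simp: not_le)
  show "\<forall>\<^sub>F t in at_left b. z < sup_neg X \<alpha> t"
  proof (cases "s < b")
    case True
    have "\<forall>\<^sub>F t in at_left b. s < t"
      using True by (rule eventually_at_left_real[THEN eventually_mono]) auto
    then show ?thesis
    proof eventually_elim
      case (elim t)
      then show ?case using sup_neg_upper[of \<alpha> s t] s assms(1) by linarith
    qed
  next
    case False
    have "((\<lambda>t. - X t) \<longlongrightarrow> - X b) (at_left b)"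
      using left_cont by (rule tendsto_minus)
    then have "\<forall>\<^sub>F t in at_left b. z < - X t"
      using s False by (intro order_tendstoD(1)) auto
    moreover have "\<forall>\<^sub>F t in at_left b. t \<in> {\<alpha><..<b}"
      using assms(2) by (rule eventually_at_left_real)
    ultimately show ?thesis
    proof eventually_elim
      case (elim t)
      then show ?case using sup_neg_upper[of \<alpha> t t] assms(1) by force
    qed
  qed
next
  fix z assume "sup_neg X \<alpha> b < z"
  have "\<forall>\<^sub>F t in at_left b. t \<in> {\<alpha><..<b}"
    using assms(2) by (rule eventually_at_left_real)
  then show "\<forall>\<^sub>F t in at_left b. sup_neg X \<alpha> t < z"
  proof eventually_elim
    case (elim t)
    then show ?case
      using sup_neg_mono[of \<alpha> t b] \<open>sup_neg X \<alpha> b < z\<close> assms(1) by force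
  qed
qed

lemma sup_neg_le_before_tau0: "0 \<le> t \<Longrightarrow> ereal t < tau0 X y \<Longrightarrow> sup_neg X 0 t \<le> y"
  using nonneg_before_tau0[of t X y] by (subst sup_neg_le_iff) force+

lemma le_sup_neg_after_tau0:
  assumes "0 \<le> t" "tau0 X y \<le> ereal t"
  shows "y \<le> sup_neg X 0 t"
proof (rule ccontr)
  assume "\<not> y \<le> sup_neg X 0 t"
  then have pos: "0 < X s + y" if "0 \<le> s" "s \<le> t" for s
    using sup_neg_upper[of 0 s t] that by auto
  have "(X \<longlongrightarrow> X t) (at_right t)"
    using cadlag assms(1) unfolding cadlag_def continuous_within by auto
  then have "\<forall>\<^sub>F s in at_right t. - y < X s"
    using pos[of t] assms(1) by (intro order_tendstoD) auto
  then obtain b where "t < b" and b: "\<And>s. t < s \<Longrightarrow> s < b \<Longrightarrow> - y < X s"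
    unfolding eventually_at_right_field by blast
  have b_le: "ereal b \<le> tau0 X y"
    unfolding tau0_def
  proof (rule Inf_greatest, clarsimp)
    fix s assume "0 \<le> s" "X s + y < 0"
    then show "b \<le> s" using pos[of s] b[of s] by (cases "s \<le> t") force+
  qed
  show False using order_trans[OF b_le assms(2)] \<open>t < b\<close> by simp
qed

lemma reflected_before_tau0: "0 \<le> t \<Longrightarrow> ereal t < tau0 X y \<Longrightarrow> reflected X y t = X t + y"
  unfolding reflected_def using sup_neg_le_before_tau0[of t y] by (simp add: max_absorb1)

lemma reflected_eq_after_tau0:
  "y \<le> y' \<Longrightarrow> 0 \<le> t \<Longrightarrow> tau0 X y' \<le> ereal t \<Longrightarrow> reflected X y t = reflected X y' t"
  unfolding reflected_def using le_sup_neg_after_tau0[of t y'] by (simp add: max_def)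

end

section \<open>The barrier strategy along a fixed sample path\<close>

declare pc_state.simps(2)[simp del]

locale sample_path = cadlag_path X for X +
  fixes T :: "nat \<Rightarrow> real"
  assumes X0: "X 0 = 0" and T0: "T 0 = 0" and T_strict_mono: "strict_mono T"
    and T_unbounded: "\<And>t. \<exists>k. t < T k"
    and left_continuous_at_T: "\<And>k. 1 \<le> k \<Longrightarrow> (X \<longlongrightarrow> X (T k)) (at_left (T k))"
begin

lemmas T_less_iff = strict_mono_less[OF T_strict_mono]
lemmas T_le_iff = strict_mono_less_eq[OF T_strict_mono]

lemma T_nonneg: "0 \<le> T k"
  using T_le_iff[of 0 k] T0 by simp

lemma pc_idx_eqI:
  assumes "T k \<le> t" "t < T (Suc k)"
  shows "pc_idx T t = k"
  unfolding pc_idx_def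
proof (rule Greatest_equality)
  fix j assume "T j \<le> t"
  then have "T j < T (Suc k)" using assms(2) by simp
  then show "j \<le> k" by (simp add: T_less_iff)
qed (fact assms(1))

lemma arrival_interval:
  assumes "0 \<le> t"
  obtains k where "T k \<le> t" "t < T (Suc k)"
proof -
  obtain n where "t < T n" using T_unbounded by blast
  moreover have "\<not> t < T 0" using assms T0 by simp
  ultimately obtain k where "\<not> t < T k" "t < T (Suc k)"
    using ex_least_nat_less[of "\<lambda>n. t < T n" n] by auto
  then show ?thesis by (intro that) (auto simp: not_less)
qed

lemma pc_Uint_eq:
  assumes "T k \<le> t"
  shows "pc_Uint X T u k t = X t + max (u - X (T k)) (sup_neg X (T k) t)"
proof -
  have "(SUP s\<in>{T k..t}. - (u + X s - X (T k))) = (SUP s\<in>{T k..t}. (X (T k) - u) - X s)"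
    by (simp add: algebra_simps)
  also have "\<dots> = X (T k) - u + sup_neg X (T k) t"
    by (rule SUP_shifted_neg[OF T_nonneg assms])
  finally show ?thesis unfolding pc_Uint_def by (simp add: max_def)
qed

(* U(T (Suc k)-) when U(T k) = u *)
definition U_pre :: "real \<Rightarrow> nat \<Rightarrow> real" where
  "U_pre u k = X (T (Suc k)) + max (u - X (T k)) (sup_neg X (T k) (T (Suc k)))"

lemma pc_Uint_left_limit: "Lim (at_left (T (Suc k))) (pc_Uint X T u k) = U_pre u k"
proof (rule tendsto_Lim)
  have before: "T k < T (Suc k)" by (simp add: T_less_iff)
  have left_cont: "(X \<longlongrightarrow> X (T (Suc k))) (at_left (T (Suc k)))"
    using left_continuous_at_T by simp
  have "\<forall>\<^sub>F t in at_left (T (Suc k)).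
      X t + max (u - X (T k)) (sup_neg X (T k) t) = pc_Uint X T u k t"
    using eventually_at_left_real[OF before] by eventually_elim (simp add: pc_Uint_eq)
  then show "(pc_Uint X T u k \<longlongrightarrow> U_pre u k) (at_left (T (Suc k)))"
    unfolding U_pre_def
    by (rule Lim_transform_eventually[rotated])
      (intro tendsto_intros left_cont sup_neg_tendsto_left[OF T_nonneg before left_cont])
qed simp

end

locale barrier_strategy = sample_path +
  fixes a :: real
begin

abbreviation U :: "real \<Rightarrow> real \<Rightarrow> real" where "U y \<equiv> pc_U X T a y"
abbreviation L :: "real \<Rightarrow> real \<Rightarrow> real" where "L y \<equiv> pc_L X T a y"
abbreviation R :: "real \<Rightarrow> real \<Rightarrow> real" where "R y \<equiv> pc_R X T a y"
abbreviation U_arr :: "real \<Rightarrow> nat \<Rightarrow> real" where "U_arr y k \<equiv> fst (pc_state X T a y k)"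
abbreviation L_arr :: "real \<Rightarrow> nat \<Rightarrow> real" where "L_arr y k \<equiv> snd (pc_state X T a y k)"

lemma pc_state_Suc:
  "pc_state X T a y (Suc k) =
    (min (U_pre (U_arr y k) k) a, L_arr y k + max (U_pre (U_arr y k) k - a) 0)"
  by (simp add: pc_state.simps(2) pc_Uint_left_limit Let_def split: prod.splits)

lemma pc_on_interval:
  assumes "T k \<le> t" "t < T (Suc k)"
  shows "U y t = X t + max (U_arr y k - X (T k)) (sup_neg X (T k) t)"
    and "L y t = L_arr y k"
    and "R y t = max (U_arr y k - X (T k)) (sup_neg X (T k) t) - y + L_arr y k"
  using assms by (simp_all add: pc_U_def pc_L_def pc_R_def pc_idx_eqI pc_Uint_eq)

lemma L_arr_nonneg: "0 \<le> L_arr y k"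
  by (induction k) (auto simp: pc_state_Suc)

lemma injected_arr_nonneg: "X (T k) + y \<le> U_arr y k + L_arr y k"
  by (induction k) (auto simp: pc_state_Suc U_pre_def X0 T0)

lemma U_arr_le_barrier: "1 \<le> k \<Longrightarrow> U_arr y k \<le> a"
  by (cases k) (auto simp: pc_state_Suc)

lemma U_arr_mono: "y \<le> y' \<Longrightarrow> U_arr y k \<le> U_arr y' k"
proof (induction k)
  case (Suc k)
  then show ?case by (simp add: pc_state_Suc U_pre_def)
qed simp

lemma L_nonneg:
  assumes "0 \<le> t"
  shows "0 \<le> L y t"
proof -
  obtain k where "T k \<le> t" "t < T (Suc k)" using arrival_interval assms by blast
  then show ?thesis using pc_on_interval(2) L_arr_nonneg[of y k] by simp
qed

lemma R_nonneg:
  assumes "0 \<le> t"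
  shows "0 \<le> R y t"
proof -
  obtain k where "T k \<le> t" "t < T (Suc k)" using arrival_interval assms by blast
  then show ?thesis using pc_on_interval(3) injected_arr_nonneg[of k y] by simp
qed

lemma states_merge:
  assumes "U_arr y K = U_arr y' K" "K \<le> k"
  shows "U_arr y k = U_arr y' k \<and> L_arr y k - L_arr y' k = L_arr y K - L_arr y' K"
  using assms(2)
proof (induction k rule: dec_induct)
  case base
  then show ?case using assms(1) by simp
next
  case (step k)
  then show ?case by (simp add: pc_state_Suc)
qed

lemma differences_after_merge:
  assumes "U_arr y K = U_arr y' K" "T K \<le> t"
  shows "L y t - L y' t = L_arr y K - L_arr y' K"
    and "R y t - R y' t = L_arr y K - L_arr y' K - (y - y')"
proof -
  have "0 \<le> t" using T_nonneg[of K] assms(2) by linarith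
  then obtain k where k: "T k \<le> t" "t < T (Suc k)" by (rule arrival_interval)
  have "T K < T (Suc k)" using assms(2) k(2) by simp
  then have "K \<le> k" by (simp add: T_less_iff)
  note merged = states_merge[OF assms(1) this]
  show L_diff: "L y t - L y' t = L_arr y K - L_arr y' K"
    using merged pc_on_interval(2)[OF k] by simp
  have "U y t = U y' t" using merged pc_on_interval(1)[OF k] by simp
  then show "R y t - R y' t = L_arr y K - L_arr y' K - (y - y')"
    using L_diff unfolding pc_R_def by simp
qed

lemma U_pre_reflected: "U_pre (reflected X y (T k)) k = reflected X y (T (Suc k))"
  unfolding U_pre_def reflected_def
  using sup_neg_split[of 0 "T k" "T (Suc k)"] T_nonneg T_le_iff[of k "Suc k"]
  by (simp add: max.assoc)

lemma state_before_dividend: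
  assumes "0 \<le> y" "\<forall>j\<in>{1..k}. reflected X y (T j) \<le> a"
  shows "pc_state X T a y k = (reflected X y (T k), 0)"
  using assms(2)
proof (induction k)
  case 0
  then show ?case using assms(1) by (simp add: reflected_def sup_neg_refl X0 T0)
next
  case (Suc k)
  then show ?case by (simp add: pc_state_Suc U_pre_reflected)
qed

lemma state_at_first_dividend:
  assumes "0 \<le> y" "1 \<le> k" "\<forall>j\<in>{1..<k}. reflected X y (T j) \<le> a" "a < reflected X y (T k)"
  shows "pc_state X T a y k = (a, reflected X y (T k) - a)"
proof -
  obtain k' where k: "k = Suc k'" using assms(2) by (cases k) auto
  have "pc_state X T a y k' = (reflected X y (T k'), 0)"
    using assms(3) k by (intro state_before_dividend[OF assms(1)]) auto
  then show ?thesis using assms(4) k by (simp add: pc_state_Suc U_pre_reflected)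
qed

lemma pc_before_dividend:
  assumes "pc_state X T a y k = (reflected X y (T k), 0)" "T k \<le> t" "t < T (Suc k)"
  shows "L y t = 0" and "R y t = max y (sup_neg X 0 t) - y"
proof -
  have "max (reflected X y (T k) - X (T k)) (sup_neg X (T k) t) = max y (sup_neg X 0 t)"
    unfolding reflected_def using sup_neg_split[of 0 "T k" t] T_nonneg assms(2)
    by (simp add: max.assoc)
  then show "L y t = 0" "R y t = max y (sup_neg X 0 t) - y"
    using pc_on_interval[OF assms(2,3), of y] assms(1) by simp_all
qed

lemma le_barrier_before_Tplus:
  assumes "1 \<le> k" "ereal (T k) < Tplus X T a y"
  shows "X (T k) + y \<le> a"
proof (rule ccontr)
  assume "\<not> X (T k) + y \<le> a"
  then have "Tplus X T a y \<le> ereal (T k)"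
    unfolding Tplus_def using assms(1) by (intro Inf_lower) auto
  then show False using assms(2) by simp
qed

lemma Tplus_attained:
  assumes "Tplus X T a y < \<infinity>"
  obtains J where "1 \<le> J" "Tplus X T a y = ereal (T J)" "a < X (T J) + y"
    "\<And>j. 1 \<le> j \<Longrightarrow> j < J \<Longrightarrow> X (T j) + y \<le> a"
proof -
  have "{ereal (T k) | k. 1 \<le> k \<and> a < X (T k) + y} \<noteq> {}"
  proof
    assume "{ereal (T k) | k. 1 \<le> k \<and> a < X (T k) + y} = {}"
    then have "Tplus X T a y = \<infinity>"
      unfolding Tplus_def by (metis Inf_empty top_ereal_def)
    then show False using assms by simp
  qed
  then obtain k where "1 \<le> k" "a < X (T k) + y" by blast
  then obtain J where J: "1 \<le> J" "a < X (T J) + y"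
    and least: "\<And>j. 1 \<le> j \<Longrightarrow> j < J \<Longrightarrow> \<not> a < X (T j) + y"
    using first_index_in_range[of k k "\<lambda>j. a < X (T j) + y"] by blast
  have "Tplus X T a y = ereal (T J)"
  proof (rule antisym)
    show "Tplus X T a y \<le> ereal (T J)"
      unfolding Tplus_def using J by (intro Inf_lower) auto
    show "ereal (T J) \<le> Tplus X T a y"
      unfolding Tplus_def
    proof (rule Inf_greatest)
      fix z assume "z \<in> {ereal (T k) | k. 1 \<le> k \<and> a < X (T k) + y}"
      then obtain k where "z = ereal (T k)" "1 \<le> k" "a < X (T k) + y" by blast
      moreover have "J \<le> k" using least[of k] calculation(2,3) by (meson not_less)
      ultimately show "ereal (T J) \<le> z" by (simp add: T_le_iff)
    qed
  qed
  then show ?thesis using J least by (intro that[of J]) (auto simp: not_less)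
qed

lemma no_dividend_before:
  assumes "ereal t < tau0 X y" "ereal t < Tplus X T a y" "T k \<le> t"
  shows "\<forall>j\<in>{1..k}. reflected X y (T j) \<le> a"
proof
  fix j assume j: "j \<in> {1..k}"
  then have "ereal (T j) \<le> ereal t" using assms(3) T_le_iff[of j k] by simp
  then have "reflected X y (T j) = X (T j) + y"
    using le_less_trans[OF _ assms(1)] by (intro reflected_before_tau0[OF T_nonneg])
  also have "\<dots> \<le> a"
    using j le_less_trans[OF \<open>ereal (T j) \<le> ereal t\<close> assms(2)]
    by (intro le_barrier_before_Tplus) auto
  finally show "reflected X y (T j) \<le> a" .
qed

lemma L_R_zero_before_ruin_and_dividend:
  assumes "0 \<le> y" "0 \<le> t" "ereal t < tau0 X y" "ereal t < Tplus X T a y"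
  shows "L y t = 0" and "R y t = 0"
proof -
  obtain k where k: "T k \<le> t" "t < T (Suc k)" using arrival_interval assms(2) by blast
  have "pc_state X T a y k = (reflected X y (T k), 0)"
    using state_before_dividend[OF assms(1) no_dividend_before[OF assms(3,4) k(1)]] .
  note before = pc_before_dividend[OF this k]
  show "L y t = 0" by (fact before(1))
  show "R y t = 0" using before(2) sup_neg_le_before_tau0[OF assms(2,3)] by simp
qed

section \<open>Comparison of two initial capitals\<close>

lemma first_R_decrease_not_before_ruin:
  assumes "0 \<le> y" "tau0 X y < Tplus X T a y"
  shows "tau0 X y \<le> first_time (\<lambda>t. R y' t - R y t < 0)"
  unfolding first_time_def
proof (rule Inf_greatest, clarsimp)
  fix t assume "0 < t" "R y' t < R y t"
  show "tau0 X y \<le> ereal t"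
  proof (rule ccontr)
    assume "\<not> tau0 X y \<le> ereal t"
    then have "ereal t < tau0 X y" by simp
    then have "R y t = 0"
      using assms(1) \<open>0 < t\<close> less_trans[OF _ assms(2)]
      by (intro L_R_zero_before_ruin_and_dividend(2)) auto
    then show False using R_nonneg[of t y'] \<open>0 < t\<close> \<open>R y' t < R y t\<close> by simp
  qed
qed

lemma first_L_increase_not_before_dividend:
  assumes "0 \<le> y'" "Tplus X T a y' < tau0 X y'"
  shows "Tplus X T a y' \<le> first_time (\<lambda>t. L y' t - L y t > 0)"
  unfolding first_time_def
proof (rule Inf_greatest, clarsimp)
  fix t assume "0 < t" "L y t < L y' t"
  show "Tplus X T a y' \<le> ereal t"
  proof (rule ccontr)
    assume "\<not> Tplus X T a y' \<le> ereal t"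
    then have "ereal t < Tplus X T a y'" by simp
    then have "L y' t = 0"
      using assms(1) \<open>0 < t\<close> less_trans[OF _ assms(2)]
      by (intro L_R_zero_before_ruin_and_dividend(1)) auto
    then show False using L_nonneg[of t y] \<open>0 < t\<close> \<open>L y t < L y' t\<close> by simp
  qed
qed

lemma dividend_after_ruin:
  assumes "tau0 X y < Tplus X T a y" "1 \<le> j" "a < reflected X y (T j)"
  shows "tau0 X y \<le> ereal (T j)"
proof (rule ccontr)
  assume "\<not> tau0 X y \<le> ereal (T j)"
  then have before_ruin: "ereal (T j) < tau0 X y" by simp
  then have "reflected X y (T j) = X (T j) + y" by (rule reflected_before_tau0[OF T_nonneg])
  also have "\<dots> \<le> a"
    by (intro le_barrier_before_Tplus assms(2) less_trans[OF before_ruin assms(1)])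
  finally show False using assms(3) by simp
qed

lemma differences_before_first_dividend:
  assumes "0 \<le> y" "y \<le> y'" "\<forall>j\<in>{1..k}. reflected X y' (T j) \<le> a"
    and k: "T k \<le> t" "t < T (Suc k)"
  shows "L y' t - L y t = 0
    \<and> (tau0 X y' \<le> ereal t \<longrightarrow> R y' t - R y t = y - y')
    \<and> (ereal t < tau0 X y \<longrightarrow> R y' t - R y t = 0)"
proof -
  have "0 \<le> t" using T_nonneg[of k] k(1) by linarith
  have "\<forall>j\<in>{1..k}. reflected X y (T j) \<le> a"
    using assms(3) reflected_mono[OF assms(2)] order_trans by blast
  then have "pc_state X T a y k = (reflected X y (T k), 0)"
    by (rule state_before_dividend[OF assms(1)])
  note before = pc_before_dividend[OF this k]
  have "pc_state X T a y' k = (reflected X y' (T k), 0)"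
    using assms(1,2,3) by (intro state_before_dividend) simp_all
  note before' = pc_before_dividend[OF this k]
  have "y' \<le> sup_neg X 0 t" if "tau0 X y' \<le> ereal t"
    using le_sup_neg_after_tau0[OF \<open>0 \<le> t\<close> that] .
  moreover have "sup_neg X 0 t \<le> y" if "ereal t < tau0 X y"
    using sup_neg_le_before_tau0[OF \<open>0 \<le> t\<close> that] .
  ultimately show ?thesis using before before' assms(2) by auto
qed

lemma differences_after_first_dividend_if_ruin_first:
  assumes "0 \<le> y" "y \<le> y'" "tau0 X y' < Tplus X T a y'"
    and K: "1 \<le> K" "\<forall>j\<in>{1..<K}. reflected X y' (T j) \<le> a" "a < reflected X y' (T K)"
    and "T K \<le> t"
  shows "L y' t - L y t = 0 \<and> R y' t - R y t = y - y' \<and> tau0 X y \<le> ereal t"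
proof -
  have ruined: "tau0 X y' \<le> ereal (T K)"
    using dividend_after_ruin[OF assms(3) K(1,3)] .
  have same: "reflected X y (T K) = reflected X y' (T K)"
    by (rule reflected_eq_after_tau0[OF assms(2) T_nonneg ruined])
  have "\<forall>j\<in>{1..<K}. reflected X y (T j) \<le> a"
    using K(2) reflected_mono[OF assms(2)] order_trans by blast
  then have "pc_state X T a y K = (a, reflected X y (T K) - a)"
    using state_at_first_dividend[OF assms(1) K(1)] K(3) same by simp
  moreover have "pc_state X T a y' K = (a, reflected X y' (T K) - a)"
    using assms(1,2) K by (intro state_at_first_dividend) simp_all
  ultimately have "L y' t - L y t = 0" "R y' t - R y t = y - y'"
    using differences_after_merge[of y' K y t] same \<open>T K \<le> t\<close> by simp_all
  moreover have "tau0 X y \<le> ereal t"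
    using order_trans[OF tau0_mono[OF assms(2)] ruined] \<open>T K \<le> t\<close> by (simp add: order_trans)
  ultimately show ?thesis by simp
qed

lemma differences_if_ruin_first:
  assumes "0 \<le> y" "y \<le> y'" "tau0 X y' < Tplus X T a y'" "0 \<le> t"
  shows "L y' t - L y t = 0
    \<and> (tau0 X y' \<le> ereal t \<longrightarrow> R y' t - R y t = y - y')
    \<and> (ereal t < tau0 X y \<longrightarrow> R y' t - R y t = 0)"
proof -
  obtain k where k: "T k \<le> t" "t < T (Suc k)" using arrival_interval assms(4) by blast
  show ?thesis
  proof (cases "\<forall>j\<in>{1..k}. reflected X y' (T j) \<le> a")
    case True
    then show ?thesis by (rule differences_before_first_dividend[OF assms(1,2) _ k])
  next
    case False
    then obtain j where "1 \<le> j" "j \<le> k" "a < reflected X y' (T j)" by (auto simp: not_le)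
    then obtain K where K: "1 \<le> K" "K \<le> k" "a < reflected X y' (T K)"
      "\<And>i. 1 \<le> i \<Longrightarrow> i < K \<Longrightarrow> \<not> a < reflected X y' (T i)"
      using first_index_in_range[of j k "\<lambda>i. a < reflected X y' (T i)"] by blast
    have "T K \<le> t" using K(2) k(1) T_le_iff[of K k] by simp
    moreover have "\<forall>i\<in>{1..<K}. reflected X y' (T i) \<le> a"
      using K(4) by (auto simp: not_less)
    ultimately have "L y' t - L y t = 0 \<and> R y' t - R y t = y - y' \<and> tau0 X y \<le> ereal t"
      by (intro differences_after_first_dividend_if_ruin_first[OF assms(1-3) K(1) _ K(3)])
    then show ?thesis by auto
  qed
qed

(* J indexes the first dividend time of the strategy from y, which precedes its ruin; up to
   T J the path X + y stays nonnegative, so neither strategy injects capital. *)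
context
  fixes y y' :: real and J :: nat
  assumes y_nonneg: "0 \<le> y" and y_le: "y \<le> y'"
    and J: "1 \<le> J" "ereal (T J) < tau0 X y" "a < X (T J) + y"
      "\<And>j. 1 \<le> j \<Longrightarrow> j < J \<Longrightarrow> X (T j) + y \<le> a"
begin

lemma reflected_before_J: "j \<le> J \<Longrightarrow> reflected X y (T j) = X (T j) + y"
  using le_less_trans[OF _ J(2)] T_le_iff[of j J]
  by (intro reflected_before_tau0[OF T_nonneg]) simp

lemma state_before_J: "j < J \<Longrightarrow> pc_state X T a y j = (X (T j) + y, 0)"
  using state_before_dividend[OF y_nonneg, of j] reflected_before_J J(4) by simp

lemma state_at_J: "pc_state X T a y J = (a, X (T J) + y - a)"
  using state_at_first_dividend[OF y_nonneg J(1)] reflected_before_J J(3,4) by simp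

lemma sup_neg_le_before_J:
  assumes "T j \<le> s" "s \<le> T J"
  shows "sup_neg X (T j) s \<le> y"
proof -
  have "- X u \<le> y" if "T j \<le> u" "u \<le> s" for u
    using nonneg_before_tau0[OF J(2), of u] T_nonneg[of j] that assms by force
  then show ?thesis using assms(1) by (subst sup_neg_le_iff[OF T_nonneg]) auto
qed

lemma no_injection_before_J: "j \<le> J \<Longrightarrow> U_arr y' j + L_arr y' j = X (T j) + y'"
proof (induction j)
  case 0
  then show ?case by (simp add: X0 T0)
next
  case (Suc j)
  have "sup_neg X (T j) (T (Suc j)) \<le> y"
    using Suc.prems T_le_iff[of "Suc j" J] T_le_iff[of j "Suc j"]
    by (intro sup_neg_le_before_J) simp_all
  also have "y = U_arr y j - X (T j)"
    using state_before_J[of j] Suc.prems by simp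
  also have "\<dots> \<le> U_arr y' j - X (T j)"
    using U_arr_mono[OF y_le] by simp
  finally have "U_pre (U_arr y' j) j = X (T (Suc j)) + U_arr y' j - X (T j)"
    unfolding U_pre_def by simp
  then show ?case using Suc by (simp add: pc_state_Suc)
qed

lemma state_at_J': "pc_state X T a y' J = (a, X (T J) + y' - a)"
proof -
  have "U_arr y' J = a"
    using U_arr_mono[OF y_le, of J] state_at_J U_arr_le_barrier[OF J(1), of y'] by simp
  then show ?thesis using no_injection_before_J[of J] by (simp add: prod_eq_iff)
qed

lemma R_zero_before_J:
  assumes "0 \<le> t" "t < T J"
  shows "R y t = 0" and "R y' t = 0"
proof -
  obtain k where k: "T k \<le> t" "t < T (Suc k)" using arrival_interval assms(1) by blast
  have "k < J" using k(1) assms(2) T_less_iff[of k J] by simp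
  have small: "sup_neg X (T k) t \<le> y"
    using k(1) assms(2) by (intro sup_neg_le_before_J) simp_all
  have state: "U_arr y k = X (T k) + y" "L_arr y k = 0"
    using state_before_J[OF \<open>k < J\<close>] by simp_all
  then show "R y t = 0" using pc_on_interval(3)[OF k, of y] small by simp
  have "X (T k) + y \<le> U_arr y' k" using U_arr_mono[OF y_le, of k] state by simp
  then show "R y' t = 0"
    using pc_on_interval(3)[OF k, of y'] small no_injection_before_J[of k] \<open>k < J\<close> by simp
qed

end

lemma differences_if_dividend_first:
  assumes "0 \<le> y" "y \<le> y'" "Tplus X T a y < tau0 X y" "0 \<le> t"
  shows "(ereal t < Tplus X T a y' \<longrightarrow> L y' t - L y t = 0)
    \<and> (Tplus X T a y \<le> ereal t \<longrightarrow> L y' t - L y t = y' - y)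
    \<and> R y' t - R y t = 0"
proof -
  have "Tplus X T a y < \<infinity>" using assms(3) by (cases "Tplus X T a y") auto
  then obtain J where J: "1 \<le> J" "Tplus X T a y = ereal (T J)" "a < X (T J) + y"
    "\<And>j. 1 \<le> j \<Longrightarrow> j < J \<Longrightarrow> X (T j) + y \<le> a"
    using Tplus_attained by blast
  have before_ruin: "ereal (T J) < tau0 X y" using assms(3) J(2) by simp
  note J_facts = assms(1,2) J(1) before_ruin J(3,4)
  have "L y' t - L y t = 0" if "ereal t < Tplus X T a y'"
  proof -
    have "ereal t < Tplus X T a y"
      using that Tplus_antimono[OF assms(2)] by (rule less_le_trans)
    moreover have "ereal t < tau0 X y"
      using calculation assms(3) by (rule less_trans)
    moreover have "ereal t < tau0 X y'"
      using calculation(2) tau0_mono[OF assms(2)] by (rule less_le_trans)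
    ultimately show ?thesis
      using L_R_zero_before_ruin_and_dividend(1) assms(1,2,4) that by simp
  qed
  moreover have after: "L y' t - L y t = y' - y \<and> R y' t - R y t = 0" if "T J \<le> t"
    using differences_after_merge[of y' J y t] state_at_J[OF J_facts] state_at_J'[OF J_facts]
      that by simp
  moreover have "R y' t - R y t = 0"
    using after R_zero_before_J[OF J_facts assms(4)] by (cases "T J \<le> t") auto
  ultimately show ?thesis using J(2) by auto
qed

end

section \<open>Almost sure regularity of the sample paths\<close>

lemma unbounded_if_frequently_large_steps:
  fixes t :: "nat \<Rightarrow> real"
  assumes "incseq t" "0 < c" "frequently (\<lambda>i. c < t (Suc i) - t i) sequentially"
  shows "\<exists>k. s < t k"
proof (rule ccontr)
  assume "\<nexists>k. s < t k"
  then have "bdd_above (range t)" by (auto simp: not_less intro: bdd_aboveI2)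
  then have "t \<longlonglongrightarrow> (SUP i. t i)" using assms(1) by (rule LIMSEQ_incseq_SUP)
  then have "(\<lambda>i. t (Suc i) - t i) \<longlonglongrightarrow> (SUP i. t i) - (SUP i. t i)"
    by (intro tendsto_diff LIMSEQ_Suc)
  then have "\<forall>\<^sub>F i in sequentially. t (Suc i) - t i < c"
    using assms(2) by (intro order_tendstoD(2)) simp_all
  then have "\<forall>\<^sub>F i in sequentially. \<not> c < t (Suc i) - t i"
    by eventually_elim simp
  then show False using assms(3) unfolding frequently_def by simp
qed

lemma grid_cell_containing:
  assumes "0 < h" "0 < \<tau>"
  obtains j :: nat where "real j * h < \<tau>" "\<tau> \<le> real j * h + h"
proof -
  define j where "j = nat (\<lceil>\<tau> / h\<rceil> - 1)"
  have "0 < \<tau> / h" using assms by simp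
  then have "real j = of_int \<lceil>\<tau> / h\<rceil> - 1"
    unfolding j_def by (simp add: ceiling_le_zero[symmetric] not_le)
  then have "real j < \<tau> / h" "\<tau> / h \<le> real j + 1" by linarith+
  then show ?thesis using assms(1) by (intro that[of j]) (simp_all add: field_simps)
qed

lemma cadlag_jump_seen_on_grid:
  fixes f :: "real \<Rightarrow> real"
  assumes "cadlag f" "0 < \<tau>" "\<not> (f \<longlongrightarrow> f \<tau>) (at_left \<tau>)"
  obtains c d where "0 < c" "0 < d"
    "\<And>h. 0 < h \<Longrightarrow> h < d \<Longrightarrow> \<exists>j::nat. real j * h < \<tau> \<and> \<tau> \<le> real j * h + h
       \<and> c < \<bar>f (real j * h + h) - f (real j * h)\<bar>"
proof -
  obtain l where l: "(f \<longlongrightarrow> l) (at_left \<tau>)"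
    using assms(1,2) unfolding cadlag_def by blast
  define \<delta> where "\<delta> = \<bar>l - f \<tau>\<bar>"
  have "0 < \<delta>" unfolding \<delta>_def using l assms(3) by auto
  obtain b1 where "b1 < \<tau>" and b1: "\<And>s. b1 < s \<Longrightarrow> s < \<tau> \<Longrightarrow> \<bar>f s - l\<bar> < \<delta>/4"
    using tendstoD[OF l, of "\<delta>/4"] \<open>0 < \<delta>\<close>
    unfolding eventually_at_left_field dist_real_def by auto
  have "(f \<longlongrightarrow> f \<tau>) (at_right \<tau>)"
    using assms(1,2) unfolding cadlag_def continuous_within by auto
  then obtain b2 where "\<tau> < b2" and b2: "\<And>s. \<tau> < s \<Longrightarrow> s < b2 \<Longrightarrow> \<bar>f s - f \<tau>\<bar> < \<delta>/4"
    using tendstoD[of f "f \<tau>" "at_right \<tau>" "\<delta>/4"] \<open>0 < \<delta>\<close>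
    unfolding eventually_at_right_field dist_real_def by auto
  show ?thesis
  proof (rule that[of "\<delta>/2" "min (\<tau> - b1) (b2 - \<tau>)"])
    show "0 < \<delta>/2" "0 < min (\<tau> - b1) (b2 - \<tau>)"
      using \<open>0 < \<delta>\<close> \<open>b1 < \<tau>\<close> \<open>\<tau> < b2\<close> by auto
    fix h :: real assume "0 < h" "h < min (\<tau> - b1) (b2 - \<tau>)"
    obtain j :: nat where cell: "real j * h < \<tau>" "\<tau> \<le> real j * h + h"
      using grid_cell_containing[OF \<open>0 < h\<close> assms(2)] .
    have "\<bar>f (real j * h) - l\<bar> < \<delta>/4"
      using b1 cell \<open>h < min (\<tau> - b1) (b2 - \<tau>)\<close> by simp
    moreover have "\<bar>f (real j * h + h) - f \<tau>\<bar> < \<delta>/4"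
      using b2[of "real j * h + h"] cell \<open>h < min (\<tau> - b1) (b2 - \<tau>)\<close> \<open>0 < \<delta>\<close>
      by (cases "\<tau> = real j * h + h") auto
    ultimately have "\<delta>/2 < \<bar>f (real j * h + h) - f (real j * h)\<bar>"
      unfolding \<delta>_def by (simp add: abs_if split: if_split_asm)
    then show "\<exists>j::nat. real j * h < \<tau> \<and> \<tau> \<le> real j * h + h
       \<and> \<delta>/2 < \<bar>f (real j * h + h) - f (real j * h)\<bar>"
      using cell by blast
  qed
qed

locale levy_poisson =
  fixes M :: "'w measure" and X :: "real \<Rightarrow> 'w \<Rightarrow> real" and T :: "nat \<Rightarrow> 'w \<Rightarrow> real"
    and r :: real
  assumes levy: "levy_process M X" and rate_pos: "0 < r" and poisson: "poisson_arrivals M r T"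
    and independent: "indep_processes M X T"
begin

sublocale prob_space M
  using levy unfolding levy_process_def by auto

lemma X_measurable[measurable]: "X t \<in> borel_measurable M"
  using levy unfolding levy_process_def by auto

lemma T_measurable[measurable]: "T k \<in> borel_measurable M"
  using poisson unfolding poisson_arrivals_def by auto

lemma interarrival_exponential:
  "distributed M lborel (\<lambda>\<omega>. T (Suc k) \<omega> - T k \<omega>) (exponential_density r)"
  using poisson unfolding poisson_arrivals_def by auto

lemma AE_not_if_prob_zero:
  assumes "{\<omega>\<in>space M. P \<omega>} \<in> sets M" "prob {\<omega>\<in>space M. P \<omega>} = 0"
  shows "AE \<omega> in M. \<not> P \<omega>"
  using assms by (subst AE_iff_measurable[OF assms(1)]) (auto simp: emeasure_eq_measure)

lemma AE_arrivals_increasing: "AE \<omega> in M. \<forall>k. T k \<omega> < T (Suc k) \<omega>"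
proof (subst AE_all_countable, intro allI)
  fix k
  from exponential_distributedD_le[OF interarrival_exponential order_refl rate_pos]
  have "prob {\<omega>\<in>space M. T (Suc k) \<omega> \<le> T k \<omega>} = 0" by simp
  then show "AE \<omega> in M. T k \<omega> < T (Suc k) \<omega>"
    by (subst not_le[symmetric], intro AE_not_if_prob_zero) simp_all
qed

lemma prob_interarrivals_le_one:
  assumes "finite I" "I \<noteq> {}"
  shows "prob (\<Inter>i\<in>I. (\<lambda>\<omega>. T (Suc i) \<omega> - T i \<omega>) -` {..1} \<inter> space M) = (1 - exp (- r)) ^ card I"
proof -
  have "indep_vars (\<lambda>_. borel) (\<lambda>i \<omega>. T (Suc i) \<omega> - T i \<omega>) UNIV"
    using poisson unfolding poisson_arrivals_def by auto
  then have "prob (\<Inter>i\<in>I. (\<lambda>\<omega>. T (Suc i) \<omega> - T i \<omega>) -` {..1} \<inter> space M)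
      = (\<Prod>i\<in>I. prob ((\<lambda>\<omega>. T (Suc i) \<omega> - T i \<omega>) -` {..1} \<inter> space M))"
    using assms by (intro indep_varsD) auto
  also have "\<dots> = (\<Prod>i\<in>I. 1 - exp (- r))"
  proof (rule prod.cong)
    fix i
    from exponential_distributedD_le[OF interarrival_exponential[of i] _ rate_pos, of 1]
    show "prob ((\<lambda>\<omega>. T (Suc i) \<omega> - T i \<omega>) -` {..1} \<inter> space M) = 1 - exp (- r)"
      by (simp add: vimage_def Int_def conj_commute)
  qed simp
  finally show ?thesis by simp
qed

lemma AE_interarrivals_frequently_large:
  "AE \<omega> in M. frequently (\<lambda>i. 1 < T (Suc i) \<omega> - T i \<omega>) sequentially"
proof -
  have "AE \<omega> in M. \<not> (\<forall>i\<ge>N. T (Suc i) \<omega> - T i \<omega> \<le> 1)" for N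
  proof (rule AE_not_if_prob_zero)
    let ?B = "{\<omega>\<in>space M. \<forall>i\<ge>N. T (Suc i) \<omega> - T i \<omega> \<le> 1}"
    show B_sets: "?B \<in> sets M" by measurable
    have "prob ?B \<le> (1 - exp (- r)) ^ Suc m" for m
    proof -
      have "prob ?B \<le> prob (\<Inter>i\<in>{N..N+m}. (\<lambda>\<omega>. T (Suc i) \<omega> - T i \<omega>) -` {..1} \<inter> space M)"
        by (intro finite_measure_mono) auto
      then show ?thesis using prob_interarrivals_le_one[of "{N..N+m}"] by simp
    qed
    moreover have "(\<lambda>m. (1 - exp (- r)) ^ Suc m) \<longlonglongrightarrow> 0"
      using rate_pos by (intro LIMSEQ_power_zero LIMSEQ_Suc) auto
    ultimately have "prob ?B \<le> 0" by (intro LIMSEQ_le_const) auto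
    then show "prob ?B = 0" using measure_nonneg[of M ?B] by linarith
  qed
  then have "AE \<omega> in M. \<forall>N. \<not> (\<forall>i\<ge>N. T (Suc i) \<omega> - T i \<omega> \<le> 1)"
    by (subst AE_all_countable) blast
  then show ?thesis unfolding frequently_sequentially by eventually_elim (auto simp: not_le)
qed

lemma AE_arrivals_unbounded: "AE \<omega> in M. \<forall>s. \<exists>k. s < T k \<omega>"
  using AE_arrivals_increasing AE_interarrivals_frequently_large
proof eventually_elim
  case (elim \<omega>)
  have "incseq (\<lambda>k. T k \<omega>)" using elim(1) by (intro incseq_SucI) (simp add: less_imp_le)
  then show ?case using unbounded_if_frequently_large_steps[OF _ zero_less_one elim(2)] by blast
qed

lemma AE_cadlag: "AE \<omega> in M. cadlag (\<lambda>t. X t \<omega>)"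
  using levy unfolding levy_process_def by auto

lemma AE_X0: "AE \<omega> in M. X 0 \<omega> = 0"
  using levy unfolding levy_process_def by auto

lemma prob_increment_stationary:
  assumes "0 \<le> s" "0 \<le> h" "A \<in> sets borel"
  shows "prob {\<omega>\<in>space M. X (s + h) \<omega> - X s \<omega> \<in> A} = prob {\<omega>\<in>space M. X h \<omega> - X 0 \<omega> \<in> A}"
proof -
  have "distr M borel (\<lambda>\<omega>. X (s + h) \<omega> - X s \<omega>) = distr M borel (\<lambda>\<omega>. X h \<omega> - X 0 \<omega>)"
    using levy assms unfolding levy_process_def by auto
  then have "measure (distr M borel (\<lambda>\<omega>. X (s + h) \<omega> - X s \<omega>)) A
      = measure (distr M borel (\<lambda>\<omega>. X h \<omega> - X 0 \<omega>)) A" by simp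
  then show ?thesis using assms(3) by (simp add: measure_distr vimage_def Int_def conj_commute)
qed

lemma prob_large_increment_tendsto_zero:
  assumes "0 < c" "h \<longlonglongrightarrow> 0" "\<And>n. 0 < h n"
  shows "(\<lambda>n. prob {\<omega>\<in>space M. c < \<bar>X (h n) \<omega> - X 0 \<omega>\<bar>}) \<longlonglongrightarrow> 0"
proof -
  define E where "E n = {\<omega>\<in>space M. c < \<bar>X (h n) \<omega> - X 0 \<omega>\<bar>}" for n
  have E_sets: "E n \<in> sets M" for n unfolding E_def by measurable
  have h_right: "filterlim h (at_right 0) sequentially"
    using assms(2,3) by (intro tendsto_imp_filterlim_at_right) auto
  have "AE \<omega> in M. (\<lambda>n. indicator (E n) \<omega> :: real) \<longlonglongrightarrow> 0"
    using AE_cadlag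
  proof eventually_elim
    case (elim \<omega>)
    then have "((\<lambda>t. X t \<omega>) \<longlongrightarrow> X 0 \<omega>) (at_right 0)"
      unfolding cadlag_def continuous_within by auto
    from tendstoD[OF this assms(1)]
    have "\<forall>\<^sub>F t in at_right 0. \<bar>X t \<omega> - X 0 \<omega>\<bar> < c" by (simp add: dist_real_def)
    from eventually_compose_filterlim[OF this h_right]
    have "\<forall>\<^sub>F n in sequentially. indicator (E n) \<omega> = (0::real)"
      by eventually_elim (auto simp: E_def)
    then show ?case by (rule tendsto_eventually)
  qed
  then have "(\<lambda>n. integral\<^sup>L M (indicator (E n))) \<longlonglongrightarrow> integral\<^sup>L M (\<lambda>_. 0::real)"
    by (intro integral_dominated_convergence[where w="\<lambda>_. 1"])
      (auto intro: borel_measurable_indicator E_sets)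
  then show ?thesis using E_sets by (simp add: E_def[symmetric] Int_absorb2 sets.sets_into_space)
qed

lemma increment_event_in_X_sigma:
  assumes "A \<in> sets borel"
  shows "{\<omega>\<in>space M. X s' \<omega> - X s \<omega> \<in> A}
    \<in> sigma_sets (space M) {X t -` B \<inter> space M | t B. B \<in> sets borel}"
proof -
  define G where "G = {X t -` B \<inter> space M | t B. B \<in> sets borel}"
  define MX where "MX = sigma (space M) G"
  have "G \<subseteq> Pow (space M)" unfolding G_def by auto
  then have space_MX: "space MX = space M" and sets_MX: "sets MX = sigma_sets (space M) G"
    unfolding MX_def by (simp_all add: space_measure_of sets_measure_of)
  have [measurable]: "X t \<in> borel_measurable MX" for t
  proof (rule measurableI)
    fix B :: "real set" assume "B \<in> sets borel"
    then have "X t -` B \<inter> space M \<in> G" unfolding G_def by blast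
    then show "X t -` B \<inter> space MX \<in> sets MX"
      unfolding space_MX sets_MX by (rule sigma_sets.Basic)
  qed auto
  have "{\<omega>\<in>space MX. X s' \<omega> - X s \<omega> \<in> A} \<in> sets MX" using assms by measurable
  then show ?thesis unfolding space_MX sets_MX G_def .
qed

definition arrival_in_cell :: "nat \<Rightarrow> real \<Rightarrow> nat \<Rightarrow> 'w set" where
  "arrival_in_cell k h j = T k -` {real j * h <.. real j * h + h} \<inter> space M"

definition large_increment_on_cell :: "real \<Rightarrow> real \<Rightarrow> nat \<Rightarrow> 'w set" where
  "large_increment_on_cell c h j =
    {\<omega>\<in>space M. c < \<bar>X (real j * h + h) \<omega> - X (real j * h) \<omega>\<bar>}"

lemma cell_sets[measurable]:
  "arrival_in_cell k h j \<in> sets M" "large_increment_on_cell c h j \<in> sets M"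
  unfolding arrival_in_cell_def large_increment_on_cell_def by measurable

lemma prob_arrival_and_large_increment:
  assumes "0 < h"
  shows "prob (arrival_in_cell k h j \<inter> large_increment_on_cell c h j)
    = prob (arrival_in_cell k h j) * prob {\<omega>\<in>space M. c < \<bar>X h \<omega> - X 0 \<omega>\<bar>}"
proof -
  have borel: "{z::real. c < \<bar>z\<bar>} \<in> sets borel" by measurable
  have "arrival_in_cell k h j \<in> sigma_sets (space M) {T k -` B \<inter> space M | k B. B \<in> sets borel}"
    unfolding arrival_in_cell_def
    by (rule sigma_sets.Basic)
      (auto intro!: exI[of _ k] exI[of _ "{real j * h <.. real j * h + h}"])
  moreover have "large_increment_on_cell c h j
      \<in> sigma_sets (space M) {X t -` B \<inter> space M | t B. B \<in> sets borel}"
    unfolding large_increment_on_cell_def using increment_event_in_X_sigma[OF borel] by simp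
  ultimately have "prob (large_increment_on_cell c h j \<inter> arrival_in_cell k h j)
      = prob (large_increment_on_cell c h j) * prob (arrival_in_cell k h j)"
    using independent unfolding indep_processes_def by (intro indep_setD)
  moreover have "prob (large_increment_on_cell c h j) = prob {\<omega>\<in>space M. c < \<bar>X h \<omega> - X 0 \<omega>\<bar>}"
    using prob_increment_stationary[OF _ _ borel, of "real j * h" h] assms
    unfolding large_increment_on_cell_def by simp
  ultimately show ?thesis by (simp add: Int_commute mult.commute)
qed

lemma prob_arrival_in_some_cell_with_large_increment:
  assumes "0 < h"
  shows "prob (\<Union>j. arrival_in_cell k h j \<inter> large_increment_on_cell c h j)
    \<le> prob {\<omega>\<in>space M. c < \<bar>X h \<omega> - X 0 \<omega>\<bar>}"
proof -
  let ?p = "prob {\<omega>\<in>space M. c < \<bar>X h \<omega> - X 0 \<omega>\<bar>}"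
  have cells_ordered: "real i * h + h \<le> real j * h" if "i < j" for i j
    using mult_right_mono[of "real i + 1" "real j" h] that assms by (simp add: distrib_right)
  have "disjoint_family (arrival_in_cell k h)"
    unfolding disjoint_family_on_def
  proof (intro ballI impI)
    fix i j :: nat assume "i \<noteq> j"
    then have "real i * h + h \<le> real j * h \<or> real j * h + h \<le> real i * h"
      using cells_ordered by (meson linorder_neq_iff)
    then show "arrival_in_cell k h i \<inter> arrival_in_cell k h j = {}"
      unfolding arrival_in_cell_def by auto
  qed
  then have "(\<lambda>j. prob (arrival_in_cell k h j)) sums prob (\<Union>j. arrival_in_cell k h j)"
    by (intro finite_measure_UNION) auto
  then have sums: "(\<lambda>j. prob (arrival_in_cell k h j \<inter> large_increment_on_cell c h j))
      sums (prob (\<Union>j. arrival_in_cell k h j) * ?p)"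
    unfolding prob_arrival_and_large_increment[OF assms] by (rule sums_mult2)
  have "prob (\<Union>j. arrival_in_cell k h j \<inter> large_increment_on_cell c h j)
      \<le> (\<Sum>j. prob (arrival_in_cell k h j \<inter> large_increment_on_cell c h j))"
    using sums by (intro finite_measure_subadditive_countably) (auto simp: sums_iff)
  also have "\<dots> = prob (\<Union>j. arrival_in_cell k h j) * ?p"
    using sums by (simp add: sums_iff)
  also have "\<dots> \<le> ?p" by (simp add: mult_left_le_one_le)
  finally show ?thesis .
qed

lemma null_sets_arrival_in_cells_with_large_increment:
  assumes "0 < c" "h \<longlonglongrightarrow> 0" "\<And>n. 0 < h n"
  shows "(\<Inter>n\<in>{N..}. \<Union>j. arrival_in_cell k (h n) j \<inter> large_increment_on_cell c (h n) j)
    \<in> null_sets M" (is "?B \<in> null_sets M")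
proof -
  have "prob ?B \<le> prob {\<omega>\<in>space M. c < \<bar>X (h n) \<omega> - X 0 \<omega>\<bar>}" if "N \<le> n" for n
  proof -
    have "prob ?B \<le> prob (\<Union>j. arrival_in_cell k (h n) j \<inter> large_increment_on_cell c (h n) j)"
      using that by (intro finite_measure_mono) auto
    also have "\<dots> \<le> prob {\<omega>\<in>space M. c < \<bar>X (h n) \<omega> - X 0 \<omega>\<bar>}"
      by (rule prob_arrival_in_some_cell_with_large_increment[OF assms(3)])
    finally show ?thesis .
  qed
  then have "prob ?B \<le> 0"
    by (intro LIMSEQ_le_const[OF prob_large_increment_tendsto_zero[OF assms]]) auto
  then have "prob ?B = 0" using measure_nonneg[of M ?B] by linarith
  then show ?thesis by (simp add: null_sets_def emeasure_eq_measure)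
qed

lemma jump_at_arrival_seen_in_cells:
  assumes "\<omega> \<in> space M" "cadlag (\<lambda>t. X t \<omega>)" "0 < T k \<omega>"
    "\<not> ((\<lambda>t. X t \<omega>) \<longlongrightarrow> X (T k \<omega>) \<omega>) (at_left (T k \<omega>))"
    and h: "h \<longlonglongrightarrow> 0" "\<And>n. 0 < h n"
  shows "\<exists>m N. \<omega> \<in> (\<Inter>n\<in>{N..}. \<Union>j. arrival_in_cell k (h n) j
    \<inter> large_increment_on_cell (inverse (real (Suc m))) (h n) j)"
proof -
  obtain c d where "0 < c" "0 < d" and grid: "\<And>h. 0 < h \<Longrightarrow> h < d \<Longrightarrow> \<exists>j::nat.
      real j * h < T k \<omega> \<and> T k \<omega> \<le> real j * h + h
      \<and> c < \<bar>X (real j * h + h) \<omega> - X (real j * h) \<omega>\<bar>"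
    using cadlag_jump_seen_on_grid[OF assms(2-4)] by blast
  obtain m where "inverse (real (Suc m)) < c" using reals_Archimedean[OF \<open>0 < c\<close>] by blast
  obtain N where "\<forall>n\<ge>N. h n < d"
    using order_tendstoD(2)[OF h(1) \<open>0 < d\<close>] unfolding eventually_sequentially by blast
  have "\<omega> \<in> (\<Union>j. arrival_in_cell k (h n) j
      \<inter> large_increment_on_cell (inverse (real (Suc m))) (h n) j)" if "N \<le> n" for n
  proof -
    have "h n < d" using \<open>\<forall>n\<ge>N. h n < d\<close> that by simp
    then obtain j where "real j * h n < T k \<omega>" "T k \<omega> \<le> real j * h n + h n"
        "c < \<bar>X (real j * h n + h n) \<omega> - X (real j * h n) \<omega>\<bar>"
      using grid[OF h(2)] by blast
    then show ?thesis
      using assms(1) \<open>inverse (real (Suc m)) < c\<close>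
      unfolding arrival_in_cell_def large_increment_on_cell_def by auto
  qed
  then show ?thesis by blast
qed

lemma AE_no_jump_at_arrivals:
  "AE \<omega> in M. \<forall>k. cadlag (\<lambda>t. X t \<omega>) \<longrightarrow> 0 < T k \<omega> \<longrightarrow>
     ((\<lambda>t. X t \<omega>) \<longlongrightarrow> X (T k \<omega>) \<omega>) (at_left (T k \<omega>))"
proof (subst AE_all_countable, intro allI)
  fix k
  define h :: "nat \<Rightarrow> real" where "h n = inverse (real (Suc n))" for n
  have h: "h \<longlonglongrightarrow> 0" "\<And>n. 0 < h n"
    unfolding h_def by (rule LIMSEQ_inverse_real_of_nat) simp
  define Bad where "Bad = (\<Union>m N. \<Inter>n\<in>{N..}. \<Union>j.
    arrival_in_cell k (h n) j \<inter> large_increment_on_cell (inverse (real (Suc m))) (h n) j)"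
  have null: "Bad \<in> null_sets M"
    unfolding Bad_def using h
    by (intro null_sets_UN null_sets_arrival_in_cells_with_large_increment) auto
  show "AE \<omega> in M. cadlag (\<lambda>t. X t \<omega>) \<longrightarrow> 0 < T k \<omega> \<longrightarrow>
      ((\<lambda>t. X t \<omega>) \<longlongrightarrow> X (T k \<omega>) \<omega>) (at_left (T k \<omega>))"
  proof (rule AE_I'[OF null], rule subsetI)
    fix \<omega> assume "\<omega> \<in> {\<omega>\<in>space M. \<not> (cadlag (\<lambda>t. X t \<omega>) \<longrightarrow> 0 < T k \<omega> \<longrightarrow>
      ((\<lambda>t. X t \<omega>) \<longlongrightarrow> X (T k \<omega>) \<omega>) (at_left (T k \<omega>)))}"
    then show "\<omega> \<in> Bad"
      using jump_at_arrival_seen_in_cells[of \<omega> k h] h unfolding Bad_def by auto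
  qed
qed

lemma AE_sample_path: "AE \<omega> in M. sample_path (\<lambda>t. X t \<omega>) (\<lambda>k. T k \<omega>)"
  using AE_space AE_X0 AE_cadlag AE_arrivals_increasing AE_arrivals_unbounded
    AE_no_jump_at_arrivals
proof eventually_elim
  case (elim \<omega>)
  have T0: "T 0 \<omega> = 0" using poisson elim(1) unfolding poisson_arrivals_def by auto
  have mono: "strict_mono (\<lambda>k. T k \<omega>)" using elim(4) by (simp add: strict_mono_Suc_iff)
  then have "0 < T k \<omega>" if "1 \<le> k" for k
    using strict_monoD[OF mono, of 0 k] that T0 by simp
  then show ?case
    unfolding sample_path_def sample_path_axioms_def cadlag_path_def using elim mono T0 by auto
qed

end

theorem mainTheorem4:
  fixes M :: "'w measure" and X :: "real \<Rightarrow> 'w \<Rightarrow> real" and T :: "nat \<Rightarrow> 'w \<Rightarrow> real"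
    and r a x \<epsilon> :: real
  assumes "levy_process M X"
    and "r > 0" and "poisson_arrivals M r T"
    and "indep_processes M X T"
    and "a \<ge> 0" and "x \<ge> 0" and "\<epsilon> > 0"
  shows "AE \<omega> in M.
    (let Xp = (\<lambda>t. X t \<omega>); Tp = (\<lambda>k. T k \<omega>);
         DL = (\<lambda>t. pc_L Xp Tp a (x + \<epsilon>) t - pc_L Xp Tp a x t);
         DR = (\<lambda>t. pc_R Xp Tp a (x + \<epsilon>) t - pc_R Xp Tp a x t)
     in
      (tau0 Xp x < Tplus Xp Tp a x \<longrightarrow>
         first_time (\<lambda>t. DR t < 0) \<ge> tau0 Xp x)
    \<and> (tau0 Xp (x + \<epsilon>) < Tplus Xp Tp a (x + \<epsilon>) \<longrightarrow>
         (\<forall>t\<ge>0. DL t = 0)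
       \<and> (\<forall>t\<ge>0. ereal t < tau0 Xp x \<longrightarrow> DR t = 0)
       \<and> (\<forall>t\<ge>0. tau0 Xp (x + \<epsilon>) \<le> ereal t \<longrightarrow> DR t = - \<epsilon>))
    \<and> (Tplus Xp Tp a (x + \<epsilon>) < tau0 Xp (x + \<epsilon>) \<longrightarrow>
         first_time (\<lambda>t. DL t > 0) \<ge> Tplus Xp Tp a (x + \<epsilon>))
    \<and> (Tplus Xp Tp a x < tau0 Xp x \<longrightarrow>
         (\<forall>t\<ge>0. ereal t < Tplus Xp Tp a (x + \<epsilon>) \<longrightarrow> DL t = 0)
       \<and> (\<forall>t\<ge>0. Tplus Xp Tp a x \<le> ereal t \<longrightarrow> DL t = \<epsilon>)
       \<and> (\<forall>t\<ge>0. DR t = 0)))"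
proof -
  interpret levy_poisson M X T r
    using assms(1-4) by unfold_locales
  have "0 \<le> x + \<epsilon>" "x \<le> x + \<epsilon>" using assms(6,7) by simp_all
  show ?thesis
    using AE_sample_path
  proof eventually_elim
    case (elim \<omega>)
    interpret barrier_strategy "\<lambda>t. X t \<omega>" "\<lambda>k. T k \<omega>" a
      using elim unfolding barrier_strategy_def sample_path_def by simp
    show ?case
      unfolding Let_def
      using first_R_decrease_not_before_ruin[OF assms(6), of "x + \<epsilon>"]
        differences_if_ruin_first[OF assms(6) \<open>x \<le> x + \<epsilon>\<close>]
        first_L_increase_not_before_dividend[OF \<open>0 \<le> x + \<epsilon>\<close>, of x]
        differences_if_dividend_first[OF assms(6) \<open>x \<le> x + \<epsilon>\<close>]
      by auto
  qed
qed

end
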